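(* Let $G=(V,E)$ be a finite graph with a Bernoulli bond percolation on it, and let $a,b,c\in V$. If $\mathbb{P}(ab\|c)=0$, then $$\mathbb{P}(a\|b\|c)\,\mathbb{P}(abc)=\mathbb{P}(ac\|b)\,\mathbb{P}(a\|bc)\quad\text{and}\quad \mathbb{P}(abc)=\mathbb{P}(ac)\,\mathbb{P}(bc).$$
   Context: A Bernoulli bond percolation on $G$ declares each edge $e\in E$ open independently with its own probability $p_e\in[0,1]$; clusters are connected components of the subgraph of open edges. Notation: $\mathbb{P}(abc)$ is the probability that $a,b,c$ lie in one cluster; $\mathbb{P}(a\|b\|c)$ that they lie in three pairwise different clusters; $\mathbb{P}(ab\|c)$ that $a,b$ lie in the same cluster and $c$ lies in a different cluster (similarly $\mathbb{P}(ac\|b)$ and $\mathbb{P}(a\|bc)$); $\mathbb{P}(ac)$ is the probability that $a$ and $c$ lie in the same cluster (similarly $\mathbb{P}(bc)$). *)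

theory Defs
  imports Main "HOL-Analysis.Analysis"
begin

text \<open>A finite (multi)graph is given by a finite vertex set V, a finite edge set E
  and an endpoint map ends : E -> V x V (edges are undirected).
  A percolation configuration is the set S \<subseteq> E of open edges.\<close>

definition open_rel :: "('e \<Rightarrow> 'v \<times> 'v) \<Rightarrow> 'e set \<Rightarrow> ('v \<times> 'v) set" where
  "open_rel ends S = (\<Union>e\<in>S. {ends e, prod.swap (ends e)})"

definition conn :: "('e \<Rightarrow> 'v \<times> 'v) \<Rightarrow> 'e set \<Rightarrow> 'v \<Rightarrow> 'v \<Rightarrow> bool" where
  "conn ends S u v \<longleftrightarrow> (u, v) \<in> (open_rel ends S)\<^sup>*"

definition config_weight :: "'e set \<Rightarrow> ('e \<Rightarrow> real) \<Rightarrow> 'e set \<Rightarrow> real" where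
  "config_weight E p S = (\<Prod>e\<in>S. p e) * (\<Prod>e\<in>E - S. 1 - p e)"

definition perc_prob :: "'e set \<Rightarrow> ('e \<Rightarrow> real) \<Rightarrow> ('e set \<Rightarrow> bool) \<Rightarrow> real" where
  "perc_prob E p A = (\<Sum>S\<in>Pow E. if A S then config_weight E p S else 0)"

end

theory Submission
  imports Defs
begin

text \<open>A configuration has positive weight iff it contains every edge with \<open>p e = 1\<close> and no edge
  with \<open>p e = 0\<close>; on such configurations the hypothesis says that \<open>a \<leftrightarrow> b\<close> forces \<open>a \<leftrightarrow> c\<close>.
  Let \<open>C\<close> be the set of vertices joined to \<open>c\<close> by sure edges, and \<open>A\<close> the set of vertices outside
  \<open>C\<close> that \<open>a\<close> reaches through possible edges avoiding \<open>C\<close>. Opening every possible edge avoiding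
  \<open>C\<close> shows \<open>b \<notin> A\<close>. Every path from \<open>a\<close> to \<open>c\<close> first runs inside \<open>A\<close> until it meets \<open>C\<close>, and
  every path from \<open>b\<close> to \<open>c\<close> stays outside \<open>A\<close>; so, up to null sets, the event \<open>a \<leftrightarrow> c\<close> depends
  only on the edges touching \<open>A\<close> and \<open>b \<leftrightarrow> c\<close> only on the others. Hence these two events are
  independent, and \<open>a \<leftrightarrow> b\<close> coincides almost surely with their intersection, which gives both
  identities.\<close>

definition sure_edges :: "'e set \<Rightarrow> ('e \<Rightarrow> real) \<Rightarrow> 'e set" where
  "sure_edges E p = {e \<in> E. p e = 1}"

definition possible_edges :: "'e set \<Rightarrow> ('e \<Rightarrow> real) \<Rightarrow> 'e set" where
  "possible_edges E p = {e \<in> E. p e \<noteq> 0}"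

lemma config_weight_nonzero_iff:
  assumes "finite E" "S \<subseteq> E"
  shows "config_weight E p S \<noteq> 0 \<longleftrightarrow> sure_edges E p \<subseteq> S \<and> S \<subseteq> possible_edges E p"
proof -
  have "finite S" "finite (E - S)" using assms finite_subset by auto
  then show ?thesis
    using assms(2) unfolding config_weight_def sure_edges_def possible_edges_def by auto
qed

lemma perc_prob_cong_ae:
  assumes "finite E"
    and "\<And>S. sure_edges E p \<subseteq> S \<Longrightarrow> S \<subseteq> possible_edges E p \<Longrightarrow> A S \<longleftrightarrow> B S"
  shows "perc_prob E p A = perc_prob E p B"
proof -
  have "A S \<longleftrightarrow> B S" if "S \<subseteq> E" "config_weight E p S \<noteq> 0" for S
    using assms(2) config_weight_nonzero_iff[OF assms(1) that(1)] that(2) by blast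
  then show ?thesis unfolding perc_prob_def by (intro sum.cong) auto
qed

lemma perc_prob_eq_0_iff:
  assumes "finite E" "\<And>e. e \<in> E \<Longrightarrow> 0 \<le> p e \<and> p e \<le> 1"
  shows "perc_prob E p A = 0 \<longleftrightarrow> (\<forall>S. sure_edges E p \<subseteq> S \<longrightarrow> S \<subseteq> possible_edges E p \<longrightarrow> \<not> A S)"
proof -
  have "config_weight E p S \<ge> 0" if "S \<subseteq> E" for S
    unfolding config_weight_def using that assms(2) by (intro mult_nonneg_nonneg prod_nonneg) auto
  then have "perc_prob E p A = 0 \<longleftrightarrow> (\<forall>S\<subseteq>E. config_weight E p S \<noteq> 0 \<longrightarrow> \<not> A S)"
    unfolding perc_prob_def using assms(1) by (subst sum_nonneg_eq_0_iff) auto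
  also have "\<dots> \<longleftrightarrow> (\<forall>S. sure_edges E p \<subseteq> S \<longrightarrow> S \<subseteq> possible_edges E p \<longrightarrow> \<not> A S)"
  proof (intro iffI allI impI)
    fix S assume "\<forall>S\<subseteq>E. config_weight E p S \<noteq> 0 \<longrightarrow> \<not> A S"
      and S: "sure_edges E p \<subseteq> S" "S \<subseteq> possible_edges E p"
    moreover from S have "S \<subseteq> E" unfolding possible_edges_def by auto
    ultimately show "\<not> A S" using config_weight_nonzero_iff[OF assms(1) \<open>S \<subseteq> E\<close>] by auto
  next
    fix S assume "\<forall>S. sure_edges E p \<subseteq> S \<longrightarrow> S \<subseteq> possible_edges E p \<longrightarrow> \<not> A S"
      and "S \<subseteq> E" "config_weight E p S \<noteq> 0"
    then show "\<not> A S" using config_weight_nonzero_iff[OF assms(1) \<open>S \<subseteq> E\<close>] by auto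
  qed
  finally show ?thesis .
qed

lemma perc_prob_True:
  assumes "finite E"
  shows "perc_prob E p (\<lambda>_. True) = 1"
  unfolding perc_prob_def config_weight_def
  using prod_add[OF assms, of p "\<lambda>e. 1 - p e"] by simp

lemma config_weight_union:
  assumes "finite E" "E1 \<subseteq> E" "S1 \<subseteq> E1" "S2 \<subseteq> E - E1"
  shows "config_weight E p (S1 \<union> S2) = config_weight E1 p S1 * config_weight (E - E1) p S2"
proof -
  have fin: "finite E1" "finite (E - E1)" using assms finite_subset by auto
  have "E - (S1 \<union> S2) = (E1 - S1) \<union> (E - E1 - S2)" using assms by auto
  moreover have "(\<Prod>e\<in>S1 \<union> S2. p e) = (\<Prod>e\<in>S1. p e) * (\<Prod>e\<in>S2. p e)"
    by (rule prod.union_disjoint) (use assms fin in \<open>auto intro: finite_subset\<close>)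
  moreover have "(\<Prod>e\<in>(E1 - S1) \<union> (E - E1 - S2). 1 - p e)
      = (\<Prod>e\<in>E1 - S1. 1 - p e) * (\<Prod>e\<in>E - E1 - S2. 1 - p e)"
    by (rule prod.union_disjoint) (use fin in auto)
  ultimately show ?thesis unfolding config_weight_def by (simp add: ac_simps)
qed

lemma perc_prob_split:
  assumes "finite E" "E1 \<subseteq> E"
  shows "perc_prob E p (\<lambda>S. X (S \<inter> E1) \<and> Y (S - E1)) = perc_prob E1 p X * perc_prob (E - E1) p Y"
proof -
  let ?union = "\<lambda>(S1, S2). S1 \<union> S2"
  have inj: "inj_on ?union (Pow E1 \<times> Pow (E - E1))"
    by (auto simp: inj_on_def)
  have img: "?union ` (Pow E1 \<times> Pow (E - E1)) = Pow E"
  proof (rule set_eqI, rule iffI)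
    fix S assume "S \<in> Pow E"
    then show "S \<in> ?union ` (Pow E1 \<times> Pow (E - E1))"
      by (intro image_eqI[of _ _ "(S \<inter> E1, S - E1)"]) auto
  qed (use assms in auto)
  have "perc_prob E p (\<lambda>S. X (S \<inter> E1) \<and> Y (S - E1))
      = (\<Sum>(S1, S2)\<in>Pow E1 \<times> Pow (E - E1).
           if X ((S1 \<union> S2) \<inter> E1) \<and> Y (S1 \<union> S2 - E1) then config_weight E p (S1 \<union> S2) else 0)"
    unfolding perc_prob_def img[symmetric] by (subst sum.reindex[OF inj]) (simp add: case_prod_unfold)
  also have "\<dots> = (\<Sum>(S1, S2)\<in>Pow E1 \<times> Pow (E - E1).
           (if X S1 then config_weight E1 p S1 else 0) * (if Y S2 then config_weight (E - E1) p S2 else 0))"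
  proof (rule sum.cong[OF refl])
    fix x assume "x \<in> Pow E1 \<times> Pow (E - E1)"
    then obtain S1 S2 where x: "x = (S1, S2)" and S: "S1 \<subseteq> E1" "S2 \<subseteq> E - E1" by auto
    then have "(S1 \<union> S2) \<inter> E1 = S1" "S1 \<union> S2 - E1 = S2" by auto
    then show "(case x of (S1, S2) \<Rightarrow>
          if X ((S1 \<union> S2) \<inter> E1) \<and> Y (S1 \<union> S2 - E1) then config_weight E p (S1 \<union> S2) else 0)
        = (case x of (S1, S2) \<Rightarrow>
          (if X S1 then config_weight E1 p S1 else 0) * (if Y S2 then config_weight (E - E1) p S2 else 0))"
      unfolding x using config_weight_union[OF assms S, of p] by simp
  qed
  also have "\<dots> = perc_prob E1 p X * perc_prob (E - E1) p Y"
    unfolding perc_prob_def sum_product sum.cartesian_product by simp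
  finally show ?thesis .
qed

lemma perc_prob_conj_indep:
  assumes "finite E" "E1 \<subseteq> E"
    and "\<And>S. sure_edges E p \<subseteq> S \<Longrightarrow> S \<subseteq> possible_edges E p
           \<Longrightarrow> (A S \<longleftrightarrow> X (S \<inter> E1)) \<and> (B S \<longleftrightarrow> Y (S - E1))"
  shows "perc_prob E p (\<lambda>S. A S \<and> B S) = perc_prob E p A * perc_prob E p B"
proof -
  have "perc_prob E p (\<lambda>S. A S \<and> B S) = perc_prob E p (\<lambda>S. X (S \<inter> E1) \<and> Y (S - E1))"
    and "perc_prob E p A = perc_prob E p (\<lambda>S. X (S \<inter> E1) \<and> True)"
    and "perc_prob E p B = perc_prob E p (\<lambda>S. True \<and> Y (S - E1))"
    using assms(3) by (auto intro: perc_prob_cong_ae[OF assms(1)])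
  moreover have "perc_prob E1 p (\<lambda>_. True) = 1" "perc_prob (E - E1) p (\<lambda>_. True) = 1"
    using assms(1,2) finite_subset by (auto intro: perc_prob_True)
  ultimately show ?thesis
    using perc_prob_split[OF assms(1,2), of p X Y] perc_prob_split[OF assms(1,2), of p X "\<lambda>_. True"]
      perc_prob_split[OF assms(1,2), of p "\<lambda>_. True" Y] by simp
qed

lemma open_rel_iff:
  "(u, v) \<in> open_rel ends S \<longleftrightarrow> (\<exists>e\<in>S. ends e = (u, v) \<or> ends e = (v, u))"
  unfolding open_rel_def by (auto simp: prod.swap_def) (metis fst_conv snd_conv prod.collapse)+

lemma conn_refl: "conn ends S u u"
  unfolding conn_def by simp

lemma conn_trans: "conn ends S u v \<Longrightarrow> conn ends S v w \<Longrightarrow> conn ends S u w"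
  unfolding conn_def by (rule rtrancl_trans)

lemma conn_sym: "conn ends S u v \<Longrightarrow> conn ends S v u"
proof -
  have "(open_rel ends S)\<inverse> = open_rel ends S" by (auto simp: open_rel_iff)
  then show "conn ends S u v \<Longrightarrow> conn ends S v u"
    unfolding conn_def by (metis rtrancl_converseI)
qed

lemma conn_mono: "S \<subseteq> T \<Longrightarrow> conn ends S u v \<Longrightarrow> conn ends T u v"
  unfolding conn_def open_rel_def by (erule rtrancl_mono[THEN subsetD, rotated]) auto

lemma conn_edge: "e \<in> S \<Longrightarrow> ends e = (u, v) \<or> ends e = (v, u) \<Longrightarrow> conn ends S u v"
  unfolding conn_def by (rule r_into_rtrancl) (auto simp: open_rel_iff)

text \<open>A path from \<open>u \<in> K\<close> to \<open>c\<close> uses only edges of \<open>D\<close> until it first enters \<open>C\<close>,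
  and from there the edges of \<open>F\<close> lead on to \<open>c\<close>.\<close>

lemma conn_restrict_edges:
  assumes "conn ends S u c" "u \<in> K"
    and C: "\<And>v. v \<in> C \<Longrightarrow> conn ends F v c"
    and K: "\<And>e v w. e \<in> S \<Longrightarrow> ends e = (v, w) \<or> ends e = (w, v) \<Longrightarrow> v \<in> K \<Longrightarrow> v \<notin> C
              \<Longrightarrow> (w \<in> K \<or> w \<in> C) \<and> e \<in> D"
  shows "conn ends (S \<inter> D \<union> F) u c"
proof (rule ccontr)
  let ?T = "S \<inter> D \<union> F"
  assume not_uc: "\<not> conn ends ?T u c"
  have to_c: "conn ends ?T v c" if "v \<in> C" for v
    by (rule conn_mono[OF _ C[OF that]]) auto
  let ?X = "{v \<in> K. conn ends ?T u v}"
  have "open_rel ends S `` ?X \<subseteq> ?X"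
  proof
    fix w assume "w \<in> open_rel ends S `` ?X"
    then obtain v e where v: "v \<in> K" "conn ends ?T u v"
      and e: "e \<in> S" "ends e = (v, w) \<or> ends e = (w, v)"
      by (auto simp: open_rel_iff)
    have "v \<notin> C" using not_uc conn_trans[OF v(2) to_c] by blast
    with K[OF e v(1)] have w: "w \<in> K \<or> w \<in> C" and "e \<in> D" by auto
    with e have "conn ends ?T v w" by (intro conn_edge[of e]) auto
    then have uw: "conn ends ?T u w" by (rule conn_trans[OF v(2)])
    with w not_uc conn_trans[OF uw to_c] show "w \<in> ?X" by blast
  qed
  moreover have "u \<in> ?X" "(u, c) \<in> (open_rel ends S)\<^sup>*"
    using assms(1,2) conn_refl unfolding conn_def by auto
  ultimately have "c \<in> ?X" using Image_closed_trancl by blast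
  with not_uc show False by simp
qed

definition cluster :: "('e \<Rightarrow> 'v \<times> 'v) \<Rightarrow> 'e set \<Rightarrow> 'v \<Rightarrow> 'v set" where
  "cluster ends S c = {v. conn ends S v c}"

definition component_avoiding :: "('e \<Rightarrow> 'v \<times> 'v) \<Rightarrow> 'e set \<Rightarrow> 'v set \<Rightarrow> 'v \<Rightarrow> 'v set" where
  "component_avoiding ends H C a = (open_rel ends H \<inter> (- C) \<times> (- C))\<^sup>* `` {a} - C"

definition edges_touching :: "('e \<Rightarrow> 'v \<times> 'v) \<Rightarrow> 'e set \<Rightarrow> 'v set \<Rightarrow> 'e set" where
  "edges_touching ends H A = {e \<in> H. fst (ends e) \<in> A \<or> snd (ends e) \<in> A}"

lemma component_avoiding_step:
  assumes "v \<in> component_avoiding ends H C a" "(v, w) \<in> open_rel ends H" "w \<notin> C"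
  shows "w \<in> component_avoiding ends H C a"
  using assms unfolding component_avoiding_def by (auto intro: rtrancl_into_rtrancl)

lemma conn_through_component:
  assumes "F \<subseteq> S" "S \<subseteq> H"
  shows "conn ends S a c
    \<longleftrightarrow> conn ends (S \<inter> edges_touching ends H (component_avoiding ends H (cluster ends F c) a) \<union> F) a c"
    (is "_ \<longleftrightarrow> conn ends (S \<inter> ?D \<union> F) a c")
proof
  let ?C = "cluster ends F c" and ?A = "component_avoiding ends H (cluster ends F c) a"
  assume "conn ends S a c"
  then show "conn ends (S \<inter> ?D \<union> F) a c"
  proof (rule conn_restrict_edges[where K = "?A \<union> ?C" and C = ?C])
    show "a \<in> ?A \<union> ?C" unfolding component_avoiding_def by auto
  next
    fix e v w
    assume e: "e \<in> S" "ends e = (v, w) \<or> ends e = (w, v)" and v: "v \<in> ?A \<union> ?C" "v \<notin> ?C"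
    then have "v \<in> ?A" "(v, w) \<in> open_rel ends H" using assms(2) by (auto simp: open_rel_iff)
    then have "w \<in> ?A \<union> ?C" using component_avoiding_step[of v ends H ?C a w] by blast
    moreover have "e \<in> ?D" using e assms(2) \<open>v \<in> ?A\<close> unfolding edges_touching_def by auto
    ultimately show "(w \<in> ?A \<union> ?C \<or> w \<in> ?C) \<and> e \<in> ?D" by blast
  qed (simp add: cluster_def)
next
  assume "conn ends (S \<inter> ?D \<union> F) a c"
  then show "conn ends S a c" by (rule conn_mono[rotated]) (use assms(1) in auto)
qed

lemma conn_avoiding_component:
  assumes "F \<subseteq> S" "S \<subseteq> H" "b \<notin> component_avoiding ends H (cluster ends F c) a"
  shows "conn ends S b c
    \<longleftrightarrow> conn ends (S - edges_touching ends H (component_avoiding ends H (cluster ends F c) a) \<union> F) b c"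
    (is "_ \<longleftrightarrow> conn ends (S - ?D \<union> F) b c")
proof
  let ?C = "cluster ends F c" and ?A = "component_avoiding ends H (cluster ends F c) a"
  assume "conn ends S b c"
  then have "conn ends (S \<inter> - ?D \<union> F) b c"
  proof (rule conn_restrict_edges[where K = "- ?A" and C = ?C])
    fix e v w
    assume e: "e \<in> S" "ends e = (v, w) \<or> ends e = (w, v)" and v: "v \<in> - ?A" "v \<notin> ?C"
    then have "(w, v) \<in> open_rel ends H" using assms(2) by (auto simp: open_rel_iff)
    with v have "w \<notin> ?A" using component_avoiding_step[of w ends H ?C a v] by blast
    with e v show "(w \<in> - ?A \<or> w \<in> ?C) \<and> e \<in> - ?D" unfolding edges_touching_def by auto
  qed (use assms(3) in \<open>simp_all add: cluster_def\<close>)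
  then show "conn ends (S - ?D \<union> F) b c" by (simp add: Diff_eq)
next
  assume "conn ends (S - ?D \<union> F) b c"
  then show "conn ends S b c" by (rule conn_mono[rotated]) (use assms(1) in auto)
qed

lemma notin_component_avoiding:
  assumes "F \<subseteq> H"
    and ab_ac: "\<And>S. F \<subseteq> S \<Longrightarrow> S \<subseteq> H \<Longrightarrow> conn ends S a b \<Longrightarrow> conn ends S a c"
  shows "b \<notin> component_avoiding ends H (cluster ends F c) a"
proof
  let ?C = "cluster ends F c"
  let ?R = "open_rel ends H \<inter> (- ?C) \<times> (- ?C)"
  assume b: "b \<in> component_avoiding ends H ?C a"
  define S0 where "S0 = F \<union> {e \<in> H. fst (ends e) \<notin> ?C \<and> snd (ends e) \<notin> ?C}"
  have "?R \<subseteq> open_rel ends S0"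
    unfolding S0_def by (fastforce simp: open_rel_iff)
  with b have "conn ends S0 a b"
    unfolding component_avoiding_def conn_def using rtrancl_mono by blast
  have "a \<notin> ?C"
    using b unfolding component_avoiding_def by (auto elim: converse_rtranclE)
  have "open_rel ends S0 `` (- ?C) \<subseteq> - ?C"
  proof
    fix w assume "w \<in> open_rel ends S0 `` (- ?C)"
    then obtain v e where v: "v \<notin> ?C" and e: "e \<in> S0" "ends e = (v, w) \<or> ends e = (w, v)"
      by (auto simp: open_rel_iff)
    show "w \<in> - ?C"
    proof (cases "e \<in> F")
      case True
      from True e(2) have "conn ends F v w" by (rule conn_edge)
      with v show ?thesis using conn_trans[of ends F v w c] unfolding cluster_def by blast
    next
      case False
      with e show ?thesis unfolding S0_def by auto
    qed
  qed
  with \<open>a \<notin> ?C\<close> have "\<not> conn ends S0 a c"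
    using Image_closed_trancl[of "open_rel ends S0" "- ?C"] conn_refl
    unfolding conn_def cluster_def by blast
  moreover have "F \<subseteq> S0" "S0 \<subseteq> H" using assms(1) unfolding S0_def by auto
  ultimately show False using ab_ac \<open>conn ends S0 a b\<close> by blast
qed

lemma perc_prob_conn_indep:
  assumes "finite E"
    and ab_ac: "\<And>S. sure_edges E p \<subseteq> S \<Longrightarrow> S \<subseteq> possible_edges E p
                  \<Longrightarrow> conn ends S a b \<Longrightarrow> conn ends S a c"
  shows "perc_prob E p (\<lambda>S. P (conn ends S a c) \<and> Q (conn ends S b c))
    = perc_prob E p (\<lambda>S. P (conn ends S a c)) * perc_prob E p (\<lambda>S. Q (conn ends S b c))"
proof -
  let ?F = "sure_edges E p" and ?H = "possible_edges E p"
  let ?A = "component_avoiding ends ?H (cluster ends ?F c) a"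
  let ?D = "edges_touching ends ?H ?A"
  have "?F \<subseteq> ?H" unfolding sure_edges_def possible_edges_def by auto
  have "b \<notin> ?A" by (rule notin_component_avoiding[OF \<open>?F \<subseteq> ?H\<close>]) (rule ab_ac)
  have "?D \<subseteq> E" unfolding edges_touching_def possible_edges_def by auto
  then show ?thesis
  proof (rule perc_prob_conj_indep[OF assms(1)])
    fix S assume F: "?F \<subseteq> S" and H: "S \<subseteq> ?H"
    note conn_through_component[OF F H, of ends a c] conn_avoiding_component[OF F H \<open>b \<notin> ?A\<close>]
    then show "(P (conn ends S a c) \<longleftrightarrow> (\<lambda>T. P (conn ends (T \<union> ?F) a c)) (S \<inter> ?D))
        \<and> (Q (conn ends S b c) \<longleftrightarrow> (\<lambda>T. Q (conn ends (T \<union> ?F) b c)) (S - ?D))"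
      by (simp only:)
  qed
qed

theorem mainTheorem7:
  fixes V :: "'v set" and E :: "'e set" and ends :: "'e \<Rightarrow> 'v \<times> 'v"
    and p :: "'e \<Rightarrow> real" and a b c :: 'v
  assumes "finite V" and "finite E"
    and "\<And>e. e \<in> E \<Longrightarrow> fst (ends e) \<in> V \<and> snd (ends e) \<in> V"
    and "\<And>e. e \<in> E \<Longrightarrow> 0 \<le> p e \<and> p e \<le> 1"
    and "a \<in> V" and "b \<in> V" and "c \<in> V"
    and "perc_prob E p (\<lambda>S. conn ends S a b \<and> \<not> conn ends S a c) = 0"
  shows "perc_prob E p (\<lambda>S. \<not> conn ends S a b \<and> \<not> conn ends S b c \<and> \<not> conn ends S a c)
           * perc_prob E p (\<lambda>S. conn ends S a b \<and> conn ends S b c)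
         = perc_prob E p (\<lambda>S. conn ends S a c \<and> \<not> conn ends S a b)
           * perc_prob E p (\<lambda>S. conn ends S b c \<and> \<not> conn ends S a b)
    \<and> perc_prob E p (\<lambda>S. conn ends S a b \<and> conn ends S b c)
         = perc_prob E p (\<lambda>S. conn ends S a c) * perc_prob E p (\<lambda>S. conn ends S b c)"
proof -
  let ?F = "sure_edges E p" and ?H = "possible_edges E p"
  have "\<forall>S. ?F \<subseteq> S \<longrightarrow> S \<subseteq> ?H \<longrightarrow> \<not> (conn ends S a b \<and> \<not> conn ends S a c)"
    using assms(8) by (simp only: perc_prob_eq_0_iff[OF assms(2,4)])
  then have ab_ac: "conn ends S a c" if "?F \<subseteq> S" "S \<subseteq> ?H" "conn ends S a b" for S
    using that by blast
  have ab_iff: "conn ends S a b \<longleftrightarrow> conn ends S a c \<and> conn ends S b c" if "?F \<subseteq> S" "S \<subseteq> ?H" for S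
    using ab_ac[OF that] conn_sym[of ends S a b] conn_sym[of ends S b c]
      conn_trans[of ends S b a c] conn_trans[of ends S a c b] by blast
  have indep: "perc_prob E p (\<lambda>S. P (conn ends S a c) \<and> Q (conn ends S b c))
      = perc_prob E p (\<lambda>S. P (conn ends S a c)) * perc_prob E p (\<lambda>S. Q (conn ends S b c))" for P Q
    by (rule perc_prob_conn_indep[OF assms(2)]) (rule ab_ac)
  have "perc_prob E p (\<lambda>S. \<not> conn ends S a b \<and> \<not> conn ends S b c \<and> \<not> conn ends S a c)
      = perc_prob E p (\<lambda>S. \<not> conn ends S a c \<and> \<not> conn ends S b c)"
    and "perc_prob E p (\<lambda>S. conn ends S a b \<and> conn ends S b c)
      = perc_prob E p (\<lambda>S. conn ends S a c \<and> conn ends S b c)"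
    and "perc_prob E p (\<lambda>S. conn ends S a c \<and> \<not> conn ends S a b)
      = perc_prob E p (\<lambda>S. conn ends S a c \<and> \<not> conn ends S b c)"
    and "perc_prob E p (\<lambda>S. conn ends S b c \<and> \<not> conn ends S a b)
      = perc_prob E p (\<lambda>S. \<not> conn ends S a c \<and> conn ends S b c)"
    by (intro perc_prob_cong_ae[OF assms(2)]; auto simp: ab_iff)+
  then show ?thesis
    using indep[of "\<lambda>x. x" "\<lambda>x. x"] indep[of Not Not] indep[of "\<lambda>x. x" Not] indep[of Not "\<lambda>x. x"]
    by simp
qed

end
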